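(* Consider the Data Revocation Game with negligible unlearning cost, with $d_i^{\max}=d^{\max}$ for all $i$ and $m_1<m_2<\dots<m_I$, where $m_i=(\xi_i\ell_i)^{-1}-\epsilon_i$. Then the game has a unique Nash equilibrium, described as follows. (i) If there is a user $j\in\mathcal I$ with $(I-j)d^{\max}\le m_j\le(I-j+1)d^{\max}$, then the unique equilibrium is $d_i^*=0$ for $i<j$, $d_j^*=(\xi_j\ell_j)^{-1}-(I-j)d^{\max}-\epsilon_j$, and $d_i^*=d^{\max}$ for $i>j$. (ii) Otherwise, with the conventions $m_0=-\infty$ and $m_{I+1}=+\infty$, there exists $j\in\{0,1,\dots,I\}$ with $m_j<(I-j)d^{\max}<m_{j+1}$, and the unique equilibrium is $d_i^*=0$ for $i\le j$ and $d_i^*=d^{\max}$ for $i>j$.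
   Context: Data Revocation Game with negligible unlearning cost: a finite set of users $\mathcal I=\{1,\dots,I\}$, $I\ge 2$, each with parameters $d_i^{\max}>0$, $\epsilon_i>0$, $\xi_i>0$, $\ell_i>0$. Each user chooses $d_i\in[0,d_i^{\max}]$, with payoff $U_i(d_i,\boldsymbol{d_{-i}})=\ln\big(\sum_{j\in\mathcal I}d_j+\epsilon_i\big)-\xi_i d_i\ell_i$. A Nash equilibrium is a profile $(d_i^* )$ with $d_i^*\in[0,d_i^{\max}]$ and $U_i(d_i^*,\boldsymbol{d_{-i}^*})\ge U_i(d_i,\boldsymbol{d_{-i}^*})$ for all $i$ and $d_i\in[0,d_i^{\max}]$. *)

theory Defs
  imports "HOL-Analysis.Analysis"
begin

text \<open>Data Revocation Game with negligible unlearning cost. Users are 1..I;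
a profile is d :: nat \<Rightarrow> real, only its values on {1..I} matter.\<close>

definition payoff :: "nat \<Rightarrow> (nat \<Rightarrow> real) \<Rightarrow> (nat \<Rightarrow> real) \<Rightarrow> (nat \<Rightarrow> real) \<Rightarrow> nat \<Rightarrow> (nat \<Rightarrow> real) \<Rightarrow> real" where
  "payoff I eps xi ell i d = ln ((\<Sum>j\<in>{1..I}. d j) + eps i) - xi i * d i * ell i"

definition feasible :: "nat \<Rightarrow> (nat \<Rightarrow> real) \<Rightarrow> (nat \<Rightarrow> real) \<Rightarrow> bool" where
  "feasible I dmax d \<longleftrightarrow> (\<forall>i\<in>{1..I}. 0 \<le> d i \<and> d i \<le> dmax i)"

definition nash_eq :: "nat \<Rightarrow> (nat \<Rightarrow> real) \<Rightarrow> (nat \<Rightarrow> real) \<Rightarrow> (nat \<Rightarrow> real) \<Rightarrow> (nat \<Rightarrow> real) \<Rightarrow> (nat \<Rightarrow> real) \<Rightarrow> bool" where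
  "nash_eq I dmax eps xi ell d \<longleftrightarrow> feasible I dmax d \<and>
     (\<forall>i\<in>{1..I}. \<forall>x. 0 \<le> x \<and> x \<le> dmax i \<longrightarrow>
        payoff I eps xi ell i d \<ge> payoff I eps xi ell i (d(i := x)))"

end

theory Submission imports Defs begin

text \<open>For a fixed profile of the others, user \<open>i\<close> maximises the strictly concave function
\<open>x \<mapsto> ln (A + x) - c x\<close> over \<open>[0, D]\<close>, with \<open>c = \<xi>\<^sub>i \<ell>\<^sub>i\<close>. By concavity, \<open>y\<close> is a maximiser
iff the first-order (KKT) conditions hold, and writing them in terms of the total \<open>S\<close> and the
thresholds \<open>m\<^sub>i = 1/c - \<epsilon>\<^sub>i\<close> gives: \<open>d\<^sub>i > 0 \<Longrightarrow> S \<le> m\<^sub>i\<close> and \<open>d\<^sub>i < D \<Longrightarrow> m\<^sub>i \<le> S\<close>.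
Two equilibria have the same total: if \<open>S' < S\<close>, every user active in the first equilibrium has
\<open>m\<^sub>i \<ge> S > S'\<close> and hence plays \<open>D\<close> in the second, forcing \<open>S \<le> S'\<close>. The total fixes every user
with \<open>m\<^sub>i \<noteq> S\<close> (to \<open>0\<close> or \<open>D\<close>), and since the \<open>m\<^sub>i\<close> are distinct at most one user remains, whose
value is then determined by \<open>S\<close>.\<close>

definition kkt_condition :: "nat \<Rightarrow> (nat \<Rightarrow> real) \<Rightarrow> (nat \<Rightarrow> real) \<Rightarrow> (nat \<Rightarrow> real) \<Rightarrow> bool" where
  "kkt_condition I dmax m d \<longleftrightarrow>
     (\<forall>i\<in>{1..I}. (0 < d i \<longrightarrow> (\<Sum>j\<in>{1..I}. d j) \<le> m i) \<and>
                 (d i < dmax i \<longrightarrow> m i \<le> (\<Sum>j\<in>{1..I}. d j)))"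

lemma ln_le_tangent:
  fixes v w :: real
  assumes "0 < v" "0 < w"
  shows "ln v \<le> ln w + (v - w) / w"
proof -
  have "ln (v / w) \<le> v / w - 1" using ln_le_minus_one assms by simp
  then show ?thesis using assms by (simp add: ln_div diff_divide_distrib)
qed

lemma log_payoff_tangent_bound:
  fixes A c y z :: real
  assumes "0 < A + y" "0 < A + z"
  shows "ln (A + y) - c * y \<le> ln (A + z) - c * z + (y - z) * (1 / (A + z) - c)"
  using ln_le_tangent[OF assms] by (simp add: algebra_simps)

lemma interval_maximizer_if_kkt:
  fixes A c D x y :: real
  assumes "0 < A" "0 < c" "0 \<le> y" "0 \<le> x" "x \<le> D"
    and pos: "0 < y \<Longrightarrow> A + y \<le> 1 / c"
    and below: "y < D \<Longrightarrow> 1 / c \<le> A + y"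
  shows "ln (A + x) - c * x \<le> ln (A + y) - c * y"
proof -
  have "(x - y) * (1 / (A + y) - c) \<le> 0"
  proof (cases x y rule: linorder_cases)
    case less
    then have "c \<le> 1 / (A + y)" using pos assms by (simp add: field_simps)
    with less show ?thesis by (simp add: mult_nonpos_nonneg)
  next
    case greater
    then have "1 / (A + y) \<le> c" using below assms by (simp add: field_simps)
    with greater show ?thesis by (simp add: mult_nonneg_nonpos)
  qed simp
  then show ?thesis using log_payoff_tangent_bound[of A x y c] assms by linarith
qed

lemma interval_maximizer_pos_imp_le:
  fixes A c D y :: real
  assumes "0 < A" "0 < c" "0 < y" "y \<le> D"
    and max: "\<And>x. 0 \<le> x \<Longrightarrow> x \<le> D \<Longrightarrow> ln (A + x) - c * x \<le> ln (A + y) - c * y"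
  shows "A + y \<le> 1 / c"
proof (rule ccontr)
  assume "\<not> A + y \<le> 1 / c"
  define b where "b = 1 / c"
  define z where "z = (max 0 (b - A) + y) / 2"
  have z: "0 \<le> z" "z < y" "1 / c < A + z" using \<open>\<not> A + y \<le> 1 / c\<close> \<open>0 < y\<close>
    unfolding z_def b_def[symmetric] by (auto simp: max_def field_simps)
  then have "(y - z) * (1 / (A + z) - c) < 0"
    using assms by (intro mult_pos_neg) (auto simp: field_simps)
  then have "ln (A + y) - c * y < ln (A + z) - c * z"
    using log_payoff_tangent_bound[of A y z c] assms z by linarith
  with max[of z] z \<open>y \<le> D\<close> show False by linarith
qed

lemma interval_maximizer_below_imp_ge:
  fixes A c D y :: real
  assumes "0 < A" "0 < c" "0 \<le> y" "y < D"
    and max: "\<And>x. 0 \<le> x \<Longrightarrow> x \<le> D \<Longrightarrow> ln (A + x) - c * x \<le> ln (A + y) - c * y"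
  shows "1 / c \<le> A + y"
proof (rule ccontr)
  assume "\<not> 1 / c \<le> A + y"
  define b where "b = 1 / c"
  define z where "z = (min D (b - A) + y) / 2"
  have z: "y < z" "z \<le> D" "A + z < 1 / c" using \<open>\<not> 1 / c \<le> A + y\<close> \<open>y < D\<close>
    unfolding z_def b_def[symmetric] by (auto simp: min_def field_simps)
  then have "(y - z) * (1 / (A + z) - c) < 0"
    using assms by (intro mult_neg_pos) (auto simp: field_simps)
  then have "ln (A + y) - c * y < ln (A + z) - c * z"
    using log_payoff_tangent_bound[of A y z c] assms z by linarith
  with max[of z] z \<open>0 \<le> y\<close> show False by linarith
qed

lemma sum_fun_upd_remove:
  assumes "finite A" "i \<in> A"
  shows "sum (f(i := x)) A = sum f (A - {i}) + x"
proof -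
  have "sum (f(i := x)) A = x + sum (f(i := x)) (A - {i})"
    using assms by (simp add: sum.remove)
  also have "sum (f(i := x)) (A - {i}) = sum f (A - {i})"
    by (intro sum.cong) auto
  finally show ?thesis by (simp add: add.commute)
qed

lemma nash_eq_iff_kkt:
  assumes pos: "\<forall>i\<in>{1..I}. eps i > 0 \<and> xi i > 0 \<and> ell i > 0"
    and m: "\<forall>i\<in>{1..I}. m i = 1 / (xi i * ell i) - eps i"
  shows "nash_eq I dmax eps xi ell d \<longleftrightarrow> feasible I dmax d \<and> kkt_condition I dmax m d"
proof -
  have best_response_iff:
    "(\<forall>x. 0 \<le> x \<and> x \<le> dmax i \<longrightarrow> payoff I eps xi ell i (d(i := x)) \<le> payoff I eps xi ell i d)
     \<longleftrightarrow> (0 < d i \<longrightarrow> (\<Sum>j\<in>{1..I}. d j) \<le> m i) \<and> (d i < dmax i \<longrightarrow> m i \<le> (\<Sum>j\<in>{1..I}. d j))"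
    if feas: "feasible I dmax d" and i: "i \<in> {1..I}" for i
  proof -
    define A where "A = (\<Sum>j\<in>{1..I} - {i}. d j) + eps i"
    define c where "c = xi i * ell i"
    have "0 \<le> (\<Sum>j\<in>{1..I} - {i}. d j)" using feas by (auto simp: feasible_def intro: sum_nonneg)
    then have A: "0 < A" using pos i by (simp add: A_def add_nonneg_pos)
    have c: "0 < c" using pos i by (simp add: c_def)
    have y: "0 \<le> d i" "d i \<le> dmax i" using feas i by (auto simp: feasible_def)
    have payoff_upd: "payoff I eps xi ell i (d(i := x)) = ln (A + x) - c * x" for x
      unfolding payoff_def sum_fun_upd_remove[OF finite_atLeastAtMost i] A_def c_def by (simp add: algebra_simps)
    have payoff_d: "payoff I eps xi ell i d = ln (A + d i) - c * d i"
      using payoff_upd[of "d i"] by simp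
    have total: "(\<Sum>j\<in>{1..I}. d j) - m i = A + d i - 1 / c"
      using sum_fun_upd_remove[OF finite_atLeastAtMost i, of d "d i"] m i by (simp add: A_def c_def)
    show ?thesis
      unfolding payoff_upd payoff_d
      using interval_maximizer_if_kkt[OF A c y(1)] interval_maximizer_pos_imp_le[OF A c _ y(2)]
        interval_maximizer_below_imp_ge[OF A c y(1)] total
      by (smt (verit))
  qed
  show ?thesis
    unfolding nash_eq_def kkt_condition_def using best_response_iff by auto
qed

lemma kkt_below_level:
  assumes "feasible I dmax d" "kkt_condition I dmax m d" "k \<in> {1..I}"
    and "m k < (\<Sum>j\<in>{1..I}. d j)"
  shows "d k = 0"
proof -
  have "0 \<le> d k" "0 < d k \<longrightarrow> (\<Sum>j\<in>{1..I}. d j) \<le> m k"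
    using assms(1-3) unfolding feasible_def kkt_condition_def by auto
  then show ?thesis using assms(4) by linarith
qed

lemma kkt_above_level:
  assumes "feasible I dmax d" "kkt_condition I dmax m d" "k \<in> {1..I}"
    and "(\<Sum>j\<in>{1..I}. d j) < m k"
  shows "d k = dmax k"
proof -
  have "d k \<le> dmax k" "d k < dmax k \<longrightarrow> m k \<le> (\<Sum>j\<in>{1..I}. d j)"
    using assms(1-3) unfolding feasible_def kkt_condition_def by auto
  then show ?thesis using assms(4) by linarith
qed

lemma kkt_total_le:
  assumes e: "feasible I dmax e" "kkt_condition I dmax m e"
    and e': "feasible I dmax e'" "kkt_condition I dmax m e'"
  shows "(\<Sum>i\<in>{1..I}. e i) \<le> (\<Sum>i\<in>{1..I}. e' i)"
proof (rule ccontr)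
  assume lt: "\<not> ?thesis"
  have "e i \<le> e' i" if i: "i \<in> {1..I}" for i
  proof (cases "0 < e i")
    case True
    then have "(\<Sum>j\<in>{1..I}. e' j) < m i"
      using e(2) i lt by (fastforce simp: kkt_condition_def)
    then show ?thesis using kkt_above_level[OF e' i] e(1) i by (auto simp: feasible_def)
  next
    case False
    moreover have "0 \<le> e' i" using e'(1) i by (simp add: feasible_def)
    ultimately show ?thesis by simp
  qed
  then have "(\<Sum>i\<in>{1..I}. e i) \<le> (\<Sum>i\<in>{1..I}. e' i)" by (rule sum_mono)
  with lt show False by simp
qed

lemma kkt_unique:
  assumes inj: "inj_on m {1..I}"
    and d: "feasible I dmax d" "kkt_condition I dmax m d"
    and d': "feasible I dmax d'" "kkt_condition I dmax m d'"
    and i: "i \<in> {1..I}"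
  shows "d' i = d i"
proof -
  define S where "S = (\<Sum>j\<in>{1..I}. d j)"
  have S': "(\<Sum>j\<in>{1..I}. d' j) = S"
    unfolding S_def using kkt_total_le[OF d d'] kkt_total_le[OF d' d] by simp
  have off_level: "d' k = d k" if k: "k \<in> {1..I}" "m k \<noteq> S" for k
    using kkt_below_level[OF d k(1)] kkt_below_level[OF d' k(1)]
      kkt_above_level[OF d k(1)] kkt_above_level[OF d' k(1)] k(2) S'
    by (cases "m k < S") (auto simp: S_def)
  show ?thesis
  proof (cases "m i = S")
    case True
    have others: "(\<Sum>k\<in>{1..I} - {i}. d' k) = (\<Sum>k\<in>{1..I} - {i}. d k)"
      using True inj i by (intro sum.cong refl off_level) (auto dest: inj_onD)
    have "d' i + (\<Sum>k\<in>{1..I} - {i}. d' k) = d i + (\<Sum>k\<in>{1..I} - {i}. d k)"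
      using S' i by (simp add: S_def sum.remove[symmetric])
    with others show ?thesis by simp
  qed (use off_level i in simp)
qed

lemma sum_threshold_profile:
  "(\<Sum>i\<in>{1..I}. if i \<le> k then 0 else D) = real (I - k) * (D :: real)"
proof -
  have "(\<Sum>i\<in>{1..I}. if i \<le> k then 0 else D) = (\<Sum>i\<in>{k+1..I}. D)"
    by (rule sum.mono_neutral_cong_right) auto
  then show ?thesis by simp
qed

lemma kkt_threshold_profile:
  assumes mono: "mono_on {1..I} m" and "0 \<le> D" "j \<le> I"
    and lower: "j = 0 \<or> m j \<le> real (I - j) * D"
    and upper: "j = I \<or> real (I - j) * D \<le> m (j + 1)"
  shows "feasible I (\<lambda>_. D) (\<lambda>i. if i \<le> j then 0 else D)
    \<and> kkt_condition I (\<lambda>_. D) m (\<lambda>i. if i \<le> j then 0 else D)"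
proof -
  have "m i \<le> real (I - j) * D" if "i \<in> {1..I}" "i \<le> j" for i
    using mono_onD[OF mono, of i j] that lower \<open>j \<le> I\<close> by auto
  moreover have "real (I - j) * D \<le> m i" if "i \<in> {1..I}" "j < i" for i
    using mono_onD[OF mono, of "j + 1" i] that upper by auto
  ultimately show ?thesis
    using \<open>0 \<le> D\<close> unfolding feasible_def kkt_condition_def sum_threshold_profile by auto
qed

lemma kkt_interior_profile:
  assumes mono: "mono_on {1..I} m" and j: "j \<in> {1..I}"
    and lower: "real (I - j) * D \<le> m j" and upper: "m j \<le> real (I - j + 1) * D"
  defines "d \<equiv> \<lambda>i. if i < j then 0 else if i = j then m j - real (I - j) * D else D"
  shows "feasible I (\<lambda>_. D) d \<and> kkt_condition I (\<lambda>_. D) m d"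
proof -
  have d_split: "d = (\<lambda>i. (if i \<le> j then 0 else D) + (if i = j then m j - real (I - j) * D else 0))"
    unfolding d_def by auto
  have "(\<Sum>i\<in>{1..I}. d i) = m j"
    using j unfolding d_split sum.distrib sum_threshold_profile by simp
  moreover have "m i \<le> m j" if "i \<in> {1..I}" "i < j" for i
    using mono_onD[OF mono] that j by auto
  moreover have "m j \<le> m i" if "i \<in> {1..I}" "j < i" for i
    using mono_onD[OF mono] that j by auto
  moreover have "0 \<le> D" using lower upper by (simp add: algebra_simps)
  ultimately show ?thesis
    using lower upper unfolding d_def by (auto simp: feasible_def kkt_condition_def algebra_simps)
qed

lemma threshold_index_exists:
  fixes m :: "nat \<Rightarrow> real"
  assumes "\<not> (\<exists>j\<in>{1..I}. real (I - j) * D \<le> m j \<and> m j \<le> real (I - j + 1) * D)"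
  shows "\<exists>j\<in>{0..I}. (j = 0 \<or> m j < real (I - j) * D) \<and> (j = I \<or> real (I - j) * D < m (j + 1))"
proof -
  define T where "T = {j\<in>{0..I}. j = 0 \<or> m j < real (I - j) * D}"
  define j where "j = Max T"
  have "finite T" "0 \<in> T" unfolding T_def by auto
  then have jT: "j \<in> T" and jmax: "\<And>k. k \<in> T \<Longrightarrow> k \<le> j"
    unfolding j_def by (auto intro: Max_in)
  have "real (I - j) * D < m (j + 1)" if "j < I"
  proof -
    have "j + 1 \<notin> T" using jmax by fastforce
    then have "real (I - (j + 1)) * D \<le> m (j + 1)" using that by (auto simp: T_def)
    moreover have "I - (j + 1) + 1 = I - j" using that by simp
    ultimately show ?thesis using assms that by force
  qed
  moreover have "j \<le> I" using jT by (simp add: T_def)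
  ultimately show ?thesis using jT unfolding T_def by (intro bexI[of _ j]) (auto simp: le_less)
qed

theorem theorem2:
  fixes I :: nat and D :: real and eps xi ell m :: "nat \<Rightarrow> real"
  assumes "I \<ge> 2" and "D > 0"
    and "\<forall>i\<in>{1..I}. eps i > 0 \<and> xi i > 0 \<and> ell i > 0"
    and m_def: "\<forall>i\<in>{1..I}. m i = 1 / (xi i * ell i) - eps i"
    and m_mono: "\<forall>i\<in>{1..I}. \<forall>k\<in>{1..I}. i < k \<longrightarrow> m i < m k"
  shows "(\<exists>d. nash_eq I (\<lambda>_. D) eps xi ell d \<and>
            (\<forall>d'. nash_eq I (\<lambda>_. D) eps xi ell d' \<longrightarrow> (\<forall>i\<in>{1..I}. d' i = d i)))
    \<and> (\<forall>j\<in>{1..I}. real (I - j) * D \<le> m j \<and> m j \<le> real (I - j + 1) * D \<longrightarrow>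
          nash_eq I (\<lambda>_. D) eps xi ell
            (\<lambda>i. if i < j then 0
                 else if i = j then 1 / (xi j * ell j) - real (I - j) * D - eps j
                 else D))
    \<and> ((\<not> (\<exists>j\<in>{1..I}. real (I - j) * D \<le> m j \<and> m j \<le> real (I - j + 1) * D)) \<longrightarrow>
          (\<exists>j\<in>{0..I}. (j = 0 \<or> m j < real (I - j) * D) \<and>
                       (j = I \<or> real (I - j) * D < m (j + 1)) \<and>
                       nash_eq I (\<lambda>_. D) eps xi ell (\<lambda>i. if i \<le> j then 0 else D)))"
proof -
  have strict: "strict_mono_on {1..I} m" using m_mono by (intro strict_mono_onI) auto
  note nash_iff = nash_eq_iff_kkt[OF assms(3) m_def]
  note mono = strict_mono_on_imp_mono_on[OF strict]
  have interior: "nash_eq I (\<lambda>_. D) eps xi ell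
            (\<lambda>i. if i < j then 0 else if i = j then 1 / (xi j * ell j) - real (I - j) * D - eps j else D)"
    if j: "j \<in> {1..I}" "real (I - j) * D \<le> m j \<and> m j \<le> real (I - j + 1) * D" for j
  proof -
    have "(\<lambda>i. if i < j then 0 else if i = j then 1 / (xi j * ell j) - real (I - j) * D - eps j else D)
        = (\<lambda>i. if i < j then 0 else if i = j then m j - real (I - j) * D else D)"
      using m_def j(1) by auto
    then show ?thesis using kkt_interior_profile[OF mono j(1)] j(2) unfolding nash_iff by simp
  qed
  have corner: "\<exists>j\<in>{0..I}. (j = 0 \<or> m j < real (I - j) * D) \<and> (j = I \<or> real (I - j) * D < m (j + 1))
      \<and> nash_eq I (\<lambda>_. D) eps xi ell (\<lambda>i. if i \<le> j then 0 else D)"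
    if none: "\<not> (\<exists>j\<in>{1..I}. real (I - j) * D \<le> m j \<and> m j \<le> real (I - j + 1) * D)"
  proof -
    obtain j where j: "j \<in> {0..I}" "j = 0 \<or> m j < real (I - j) * D" "j = I \<or> real (I - j) * D < m (j + 1)"
      using threshold_index_exists[OF none] by blast
    then have "nash_eq I (\<lambda>_. D) eps xi ell (\<lambda>i. if i \<le> j then 0 else D)"
      unfolding nash_iff using kkt_threshold_profile[OF mono, of D j] \<open>D > 0\<close> by auto
    with j show ?thesis by blast
  qed
  obtain d where d: "nash_eq I (\<lambda>_. D) eps xi ell d"
    using interior corner by blast
  have unique: "\<forall>i\<in>{1..I}. d' i = d i" if "nash_eq I (\<lambda>_. D) eps xi ell d'" for d'
    using kkt_unique[OF strict_mono_on_imp_inj_on[OF strict]] d that unfolding nash_iff by blast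
  show ?thesis using d unique interior corner by blast
qed

end
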